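(* Let $(\Omega,\mathcal{F})$ be a measurable space and $\{\mathcal{F}_i:i\in I\}$ a logically independent family of sub-$\sigma$-algebras of $\mathcal{F}$, with $\mathcal{A}$ the semi-ring defined below. Let $\{A^r:r\ge1\}\subseteq\mathcal{A}$ be a sequence of nontrivial sets, each written as $A^r=\bigcap_{k=1}^{n_r}A^r_{i^r_k}$ where $i^r_1,\dots,i^r_{n_r}\in I$ are pairwise distinct and each $A^r_{i^r_k}\in\mathcal{F}_{i^r_k}$ is nontrivial. If $\bigcup_{r=1}^{\infty}A^r\in\mathcal{A}$, then for every $r\ge1$ there exist sets $B_{i^r_k}\in\mathcal{F}_{i^r_k}$, $1\le k\le n_r$, each of which is either nontrivial or equal to $\Omega$, such that \[ \bigcup_{r'=1}^{\infty}A^{r'}=\bigcap_{k=1}^{n_r}B_{i^r_k}. \]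
   Context: A set $A\in\mathcal{F}$ is nontrivial if $A\neq\emptyset$ and $A\neq\Omega$. Standing assumption: all sub-$\sigma$-algebras considered are nontrivial. The family $\{\mathcal{F}_i:i\in I\}$ is logically independent if for every finite set of distinct indices $\{i_1,\dots,i_k\}\subset I$ and every choice of nontrivial $A_{i_j}\in\mathcal{F}_{i_j}$, $\bigcap_{j=1}^kA_{i_j}\neq\emptyset$. $\mathcal{A}$ denotes the collection of all finite intersections $\bigcap_{k=1}^nA_{i_k}$ with $n\ge1$, $\{i_1,\dots,i_n\}\subseteq I$ and $A_{i_k}\in\mathcal{F}_{i_k}$. *)

theory Defs
  imports "HOL-Probability.Probability"
begin

definition nontrivial_set :: "'a set \<Rightarrow> 'a set \<Rightarrow> bool" where
  "nontrivial_set \<Omega> A \<longleftrightarrow> A \<noteq> {} \<and> A \<noteq> \<Omega>"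

definition nontrivial_sub_sigma_family :: "'a measure \<Rightarrow> 'i set \<Rightarrow> ('i \<Rightarrow> 'a set set) \<Rightarrow> bool" where
  "nontrivial_sub_sigma_family M I F \<longleftrightarrow>
     (\<forall>i\<in>I. sigma_algebra (space M) (F i) \<and> F i \<subseteq> sets M
             \<and> (\<exists>A\<in>F i. nontrivial_set (space M) A))"

definition logically_independent :: "'a set \<Rightarrow> 'i set \<Rightarrow> ('i \<Rightarrow> 'a set set) \<Rightarrow> bool" where
  "logically_independent \<Omega> I F \<longleftrightarrow>
     (\<forall>J A. finite J \<and> J \<noteq> {} \<and> J \<subseteq> I \<and>
            (\<forall>j\<in>J. A j \<in> F j \<and> nontrivial_set \<Omega> (A j))
          \<longrightarrow> (\<Inter>j\<in>J. A j) \<noteq> {})"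

definition fin_inter_class :: "'i set \<Rightarrow> ('i \<Rightarrow> 'a set set) \<Rightarrow> 'a set set" where
  "fin_inter_class I F =
     {\<Inter>j\<in>J. A j | J A. finite J \<and> J \<noteq> {} \<and> J \<subseteq> I \<and> (\<forall>j\<in>J. A j \<in> F j)}"

end

theory Submission
  imports Defs
begin

text \<open>Write \<open>\<Union>r. A r\<close> as \<open>\<Inter>j\<in>J. C j\<close> with \<open>C j \<in> F j\<close>. Since \<open>A r \<subseteq> C j\<close>, the complement of a
  factor \<open>C j\<close> whose index \<open>j\<close> is not among the indices of \<open>A r\<close> is disjoint from \<open>A r\<close>; by
  logical independence it is therefore trivial, i.e. \<open>C j\<close> is the whole space. Dropping these
  factors expresses the union as an intersection over the indices of \<open>A r\<close> alone. Logical
  independence also makes \<open>A r\<close>, hence every remaining factor, nonempty.\<close>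

lemma logically_independent_INT_nonempty:
  assumes indep: "logically_independent \<Omega> I F"
    and K: "finite K" "K \<subseteq> I" "\<forall>i\<in>K. T i \<in> F i \<and> nontrivial_set \<Omega> (T i)"
  shows "(\<Inter>i\<in>K. T i) \<noteq> {}"
  using indep K unfolding logically_independent_def by (cases "K = {}") auto

lemma logically_independent_disjoint_imp_trivial:
  assumes indep: "logically_independent \<Omega> I F"
    and K: "finite K" "K \<subseteq> I" "\<forall>i\<in>K. T i \<in> F i \<and> nontrivial_set \<Omega> (T i)"
    and j: "j \<in> I" "j \<notin> K" and D: "D \<in> F j"
    and disjoint: "(\<Inter>i\<in>K. T i) \<inter> D = {}"
  shows "\<not> nontrivial_set \<Omega> D"
proof
  assume "nontrivial_set \<Omega> D"
  then have "\<forall>i\<in>insert j K. (T(j := D)) i \<in> F i \<and> nontrivial_set \<Omega> ((T(j := D)) i)"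
    using K(3) j(2) D by auto
  then have "(\<Inter>i\<in>insert j K. (T(j := D)) i) \<noteq> {}"
    using K(1,2) j(1) by (intro logically_independent_INT_nonempty[OF indep]) auto
  moreover have "(\<Inter>i\<in>insert j K. (T(j := D)) i) = D \<inter> (\<Inter>i\<in>K. T i)"
    using j(2) by auto
  ultimately show False
    using disjoint by (metis Int_commute)
qed

lemma logically_independent_factor_eq_space:
  assumes alg: "\<forall>i\<in>I. algebra \<Omega> (F i)"
    and indep: "logically_independent \<Omega> I F"
    and K: "finite K" "K \<subseteq> I" "\<forall>i\<in>K. T i \<in> F i \<and> nontrivial_set \<Omega> (T i)"
    and j: "j \<in> I" "j \<notin> K" and C: "C \<in> F j"
    and sub: "(\<Inter>i\<in>K. T i) \<subseteq> C"
  shows "C = \<Omega>"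
proof -
  interpret algebra \<Omega> "F j"
    using alg j(1) by blast
  have "\<Omega> - C \<in> F j" "C \<subseteq> \<Omega>"
    using C sets_into_space by auto
  moreover have "\<not> nontrivial_set \<Omega> (\<Omega> - C)"
    using logically_independent_disjoint_imp_trivial[OF indep K j \<open>\<Omega> - C \<in> F j\<close>] sub by blast
  moreover have "C \<noteq> {}"
    using logically_independent_INT_nonempty[OF indep K] sub by blast
  ultimately show ?thesis
    unfolding nontrivial_set_def by blast
qed

lemma logically_independent_fin_inter_factorisation:
  assumes alg: "\<forall>i\<in>I. algebra \<Omega> (F i)"
    and indep: "logically_independent \<Omega> I F"
    and K: "finite K" "K \<subseteq> I" "\<forall>i\<in>K. T i \<in> F i \<and> nontrivial_set \<Omega> (T i)"
    and J: "J \<noteq> {}" "J \<subseteq> I" "\<forall>j\<in>J. C j \<in> F j"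
    and sub: "(\<Inter>i\<in>K. T i) \<subseteq> (\<Inter>j\<in>J. C j)"
  obtains B where "\<forall>i\<in>K. B i \<in> F i \<and> (nontrivial_set \<Omega> (B i) \<or> B i = \<Omega>)"
    and "(\<Inter>j\<in>J. C j) = (\<Inter>i\<in>K. B i)"
proof
  define B where "B i = (if i \<in> J then C i else \<Omega>)" for i
  have C_space: "C j \<subseteq> \<Omega>" if "j \<in> J" for j
    using that alg J unfolding algebra_iff_Un by blast
  have C_outside: "C j = \<Omega>" if "j \<in> J" "j \<notin> K" for j
    using that J sub by (intro logically_independent_factor_eq_space[OF alg indep K]) auto
  have "(\<Inter>i\<in>K. T i) \<noteq> {}"
    using logically_independent_INT_nonempty[OF indep K] .
  then have C_nonempty: "C j \<noteq> {}" if "j \<in> J" for j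
    using that sub by blast
  show "\<forall>i\<in>K. B i \<in> F i \<and> (nontrivial_set \<Omega> (B i) \<or> B i = \<Omega>)"
  proof
    fix i assume "i \<in> K"
    then have "algebra \<Omega> (F i)"
      using alg K(2) by blast
    then show "B i \<in> F i \<and> (nontrivial_set \<Omega> (B i) \<or> B i = \<Omega>)"
      using J(3) C_nonempty algebra.top unfolding B_def nontrivial_set_def by auto
  qed
  have JC_space: "(\<Inter>j\<in>J. C j) \<subseteq> \<Omega>"
    using J(1) C_space by blast
  have B_space: "(\<Inter>i\<in>K. B i) \<subseteq> \<Omega>"
  proof (cases "K = {}")
    case True
    then show ?thesis
      using sub JC_space by simp
  next
    case False
    moreover have "B i \<subseteq> \<Omega>" for i
      using C_space unfolding B_def by simp
    ultimately show ?thesis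
      by blast
  qed
  show "(\<Inter>j\<in>J. C j) = (\<Inter>i\<in>K. B i)"
  proof
    show "(\<Inter>j\<in>J. C j) \<subseteq> (\<Inter>i\<in>K. B i)"
      using JC_space unfolding B_def by auto
    show "(\<Inter>i\<in>K. B i) \<subseteq> (\<Inter>j\<in>J. C j)"
    proof
      fix x assume x: "x \<in> (\<Inter>i\<in>K. B i)"
      have "x \<in> C j" if "j \<in> J" for j
      proof (cases "j \<in> K")
        case True
        then show ?thesis
          using x that unfolding B_def by force
      next
        case False
        then show ?thesis
          using x B_space C_outside that by blast
      qed
      then show "x \<in> (\<Inter>j\<in>J. C j)"
        by blast
    qed
  qed
qed

lemma INT_inj_on_reindex:
  assumes "inj_on f N"
  shows "(\<Inter>k\<in>N. S k) = (\<Inter>i\<in>f ` N. S (inv_into N f i))"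
  using assms by (simp add: image_image)

theorem mainTheorem3:
  fixes M :: "'a measure" and I :: "'i set" and F :: "'i \<Rightarrow> 'a set set"
    and A :: "nat \<Rightarrow> 'a set" and n :: "nat \<Rightarrow> nat"
    and idx :: "nat \<Rightarrow> nat \<Rightarrow> 'i" and S :: "nat \<Rightarrow> nat \<Rightarrow> 'a set"
  assumes fam: "nontrivial_sub_sigma_family M I F"
    and indep: "logically_independent (space M) I F"
    and n_pos: "\<And>r. n r \<ge> 1"
    and idx_in: "\<And>r k. k < n r \<Longrightarrow> idx r k \<in> I"
    and idx_distinct: "\<And>r. inj_on (idx r) {..<n r}"
    and S_in: "\<And>r k. k < n r \<Longrightarrow> S r k \<in> F (idx r k)"
    and S_nontriv: "\<And>r k. k < n r \<Longrightarrow> nontrivial_set (space M) (S r k)"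
    and A_eq: "\<And>r. A r = (\<Inter>k\<in>{..<n r}. S r k)"
    and A_nontriv: "\<And>r. nontrivial_set (space M) (A r)"
    and union_in: "(\<Union>r. A r) \<in> fin_inter_class I F"
  shows "\<forall>r. \<exists>B :: nat \<Rightarrow> 'a set.
           (\<forall>k<n r. B k \<in> F (idx r k) \<and> (nontrivial_set (space M) (B k) \<or> B k = space M))
           \<and> (\<Union>r'. A r') = (\<Inter>k\<in>{..<n r}. B k)"
proof
  fix r
  obtain J C where J: "J \<noteq> {}" "J \<subseteq> I" "\<forall>j\<in>J. C j \<in> F j"
    and union_eq: "(\<Union>r. A r) = (\<Inter>j\<in>J. C j)"
    using union_in unfolding fin_inter_class_def by blast
  have alg: "\<forall>i\<in>I. algebra (space M) (F i)"
    using fam sigma_algebra.axioms(1) unfolding nontrivial_sub_sigma_family_def by blast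
  define T where "T i = S r (inv_into {..<n r} (idx r) i)" for i
  have factors: "finite (idx r ` {..<n r})" "idx r ` {..<n r} \<subseteq> I"
    "\<forall>i\<in>idx r ` {..<n r}. T i \<in> F i \<and> nontrivial_set (space M) (T i)"
    using idx_in S_in S_nontriv idx_distinct[of r] by (auto simp: T_def)
  have "A r = (\<Inter>i\<in>idx r ` {..<n r}. T i)"
    unfolding A_eq T_def using INT_inj_on_reindex[OF idx_distinct] .
  moreover have "A r \<subseteq> (\<Inter>j\<in>J. C j)"
    unfolding union_eq[symmetric] by (rule UN_upper) simp
  ultimately have "(\<Inter>i\<in>idx r ` {..<n r}. T i) \<subseteq> (\<Inter>j\<in>J. C j)"
    by simp
  then obtain B where B_in:
      "\<forall>i\<in>idx r ` {..<n r}. B i \<in> F i \<and> (nontrivial_set (space M) (B i) \<or> B i = space M)"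
    and B_eq: "(\<Inter>j\<in>J. C j) = (\<Inter>i\<in>idx r ` {..<n r}. B i)"
    by (rule logically_independent_fin_inter_factorisation[OF alg indep factors J])
  have "(\<Union>r'. A r') = (\<Inter>k\<in>{..<n r}. B (idx r k))"
    using union_eq B_eq by (simp add: image_image)
  moreover have "\<forall>k<n r. B (idx r k) \<in> F (idx r k)
      \<and> (nontrivial_set (space M) (B (idx r k)) \<or> B (idx r k) = space M)"
    using B_in by blast
  ultimately show "\<exists>B. (\<forall>k<n r. B k \<in> F (idx r k) \<and> (nontrivial_set (space M) (B k) \<or> B k = space M))
           \<and> (\<Union>r'. A r') = (\<Inter>k\<in>{..<n r}. B k)"
    by (intro exI[of _ "\<lambda>k. B (idx r k)"] conjI)
qed

end
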